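(* If $T$ is convex, then an allocation $\mathbf X\in\mathcal A(\mathtt w)$ is Pareto optimal if and only if it is a full-insurance allocation, i.e., each $X_i$ is almost surely constant.
   Context: $(\Omega,\mathcal F,\mathbb P)$ is a nonatomic probability space, $\mathcal X\subset L^\infty(\Omega,\mathcal F,\mathbb P)$ a given collection of random variables, $n\ge2$ agents, aggregate endowment a constant $\mathtt w\in\mathbb R$, and $\mathcal A(\mathtt w):=\{(X_1,\ldots,X_n)\in\mathcal X^n:\sum_iX_i=\mathtt w\}$. Agent 1: $U_1(X)=\int u_1(X)\,d(T\circ\mathbb P)$ (Choquet integral); agents $i\ge2$: $U_i(X)=\int u_i(X)\,d\mathbb P$. Standing assumption: $T:[0,1]\to[0,1]$ twice differentiable, strictly increasing, $T(0)=0$, $T(1)=1$; each $u_i$ twice differentiable, strictly concave, increasing. $\mathbf X\in\mathcal A(\mathtt w)$ is Pareto optimal if there is no $\mathbf X'\in\mathcal A(\mathtt w)$ with $U_i(X_i')\ge U_i(X_i)$ for all $i$, with at least one strict inequality. *)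

theory Defs
  imports "HOL-Probability.Probability"
begin

definition nonatomic :: "'a measure \<Rightarrow> bool" where
  "nonatomic M \<longleftrightarrow> (\<forall>A\<in>sets M. measure M A > 0 \<longrightarrow>
      (\<exists>B\<in>sets M. B \<subseteq> A \<and> 0 < measure M B \<and> measure M B < measure M A))"

definition Linf :: "'a measure \<Rightarrow> ('a \<Rightarrow> real) set" where
  "Linf M = {X. X \<in> borel_measurable M \<and> (\<exists>C. AE \<omega> in M. \<bar>X \<omega>\<bar> \<le> C)}"

definition strictly_concave_on :: "real set \<Rightarrow> (real \<Rightarrow> real) \<Rightarrow> bool" where
  "strictly_concave_on S f \<longleftrightarrow> (\<forall>x\<in>S. \<forall>y\<in>S. \<forall>t::real. x \<noteq> y \<and> 0 < t \<and> t < 1 \<longrightarrow>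
      f ((1 - t) * x + t * y) > (1 - t) * f x + t * f y)"

definition twice_differentiable_on :: "real set \<Rightarrow> (real \<Rightarrow> real) \<Rightarrow> bool" where
  "twice_differentiable_on S f \<longleftrightarrow> (\<exists>f' f''. \<forall>x\<in>S.
      (f has_real_derivative f' x) (at x within S) \<and> (f' has_real_derivative f'' x) (at x within S))"

text \<open>Choquet integral of Z with respect to the distorted probability T \<circ> P.\<close>
definition choquet :: "'a measure \<Rightarrow> (real \<Rightarrow> real) \<Rightarrow> ('a \<Rightarrow> real) \<Rightarrow> real" where
  "choquet M T Z =
     (LINT t:{0..}|lborel. T (measure M {\<omega>\<in>space M. Z \<omega> > t}))
   + (LINT t:{..<0}|lborel. T (measure M {\<omega>\<in>space M. Z \<omega> > t}) - 1)"

text \<open>Utility of agent i (agents indexed 0..n-1; agent 0 is the rank-dependent agent).\<close>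
definition util :: "'a measure \<Rightarrow> (real \<Rightarrow> real) \<Rightarrow> (nat \<Rightarrow> real \<Rightarrow> real) \<Rightarrow> nat \<Rightarrow> ('a \<Rightarrow> real) \<Rightarrow> real" where
  "util M T u i X = (if i = 0 then choquet M T (\<lambda>\<omega>. u 0 (X \<omega>))
                     else integral\<^sup>L M (\<lambda>\<omega>. u i (X \<omega>)))"

definition allocations :: "'a measure \<Rightarrow> ('a \<Rightarrow> real) set \<Rightarrow> nat \<Rightarrow> real \<Rightarrow> (nat \<Rightarrow> 'a \<Rightarrow> real) set" where
  "allocations M \<X> n w = {Xs. (\<forall>i<n. Xs i \<in> \<X>) \<and> (AE \<omega> in M. (\<Sum>i<n. Xs i \<omega>) = w)}"

definition pareto_optimal ::
  "'a measure \<Rightarrow> (real \<Rightarrow> real) \<Rightarrow> (nat \<Rightarrow> real \<Rightarrow> real) \<Rightarrow> ('a \<Rightarrow> real) set \<Rightarrow> nat \<Rightarrow> real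
     \<Rightarrow> (nat \<Rightarrow> 'a \<Rightarrow> real) \<Rightarrow> bool" where
  "pareto_optimal M T u \<X> n w Xs \<longleftrightarrow> Xs \<in> allocations M \<X> n w \<and>
     \<not> (\<exists>Ys \<in> allocations M \<X> n w. (\<forall>i<n. util M T u i (Ys i) \<ge> util M T u i (Xs i)) \<and>
                                    (\<exists>i<n. util M T u i (Ys i) > util M T u i (Xs i)))"

definition full_insurance :: "'a measure \<Rightarrow> nat \<Rightarrow> (nat \<Rightarrow> 'a \<Rightarrow> real) \<Rightarrow> bool" where
  "full_insurance M n Xs \<longleftrightarrow> (\<forall>i<n. \<exists>c::real. AE \<omega> in M. Xs i \<omega> = c)"

end

theory Submission
  imports Defs
begin

(* Convexity of T with T 0 = 0 and T 1 = 1 gives T p <= p, so the Choquet integral with respect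
   to T o P never exceeds the expectation. With Jensen's inequality, every agent, the
   rank-dependent one included, weakly prefers the sure amount E X_i to X_i, strictly so when X_i
   is not a.s. constant. Replacing each X_i by E X_i keeps the allocation feasible, so only
   full-insurance allocations can be Pareto optimal. Conversely, if X_i = c_i a.s. and Y dominates X,
   then u_i (E Y_i) >= U_i (Y_i) >= u_i c_i forces E Y_i >= c_i, with one strict inequality,
   contradicting sum_i E Y_i = w = sum_i c_i. *)

lemma Linf_mono_comp:
  assumes "X \<in> Linf M" and "mono f"
  shows "(\<lambda>\<omega>. f (X \<omega>)) \<in> Linf M"
proof -
  obtain C where C: "AE \<omega> in M. \<bar>X \<omega>\<bar> \<le> C" and [measurable]: "X \<in> borel_measurable M"
    using assms(1) by (auto simp: Linf_def)
  have [measurable]: "f \<in> borel_measurable borel"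
    using assms(2) by (rule borel_measurable_mono)
  have "AE \<omega> in M. \<bar>f (X \<omega>)\<bar> \<le> max \<bar>f (-C)\<bar> \<bar>f C\<bar>"
    using C
  proof eventually_elim
    case (elim \<omega>)
    then have "f (-C) \<le> f (X \<omega>)" "f (X \<omega>) \<le> f C"
      using assms(2) by (auto intro: monoD)
    then show ?case by linarith
  qed
  then show ?thesis by (auto simp: Linf_def)
qed

lemma (in finite_measure) Linf_integrable:
  assumes "X \<in> Linf M"
  shows "integrable M X"
proof -
  obtain C where "AE \<omega> in M. \<bar>X \<omega>\<bar> \<le> C" and "X \<in> borel_measurable M"
    using assms by (auto simp: Linf_def)
  then show ?thesis by (intro integrable_const_bound[where B = C]) auto
qed

definition choquet_integrand :: "'a measure \<Rightarrow> (real \<Rightarrow> real) \<Rightarrow> ('a \<Rightarrow> real) \<Rightarrow> real \<Rightarrow> real" where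
  "choquet_integrand M S Z t =
     (if 0 \<le> t then S (measure M {\<omega>\<in>space M. Z \<omega> > t})
      else S (measure M {\<omega>\<in>space M. Z \<omega> > t}) - 1)"

context prob_space
begin

lemma choquet_integrand_vanishes:
  assumes [measurable]: "Z \<in> borel_measurable M" and bound: "AE \<omega> in M. \<bar>Z \<omega>\<bar> \<le> C"
    and "S 0 = 0" "S 1 = 1" and "t < -C \<or> C \<le> t"
  shows "choquet_integrand M S Z t = 0"
proof -
  have "AE \<omega> in M. 0 \<le> C"
    using bound by eventually_elim auto
  then have "0 \<le> C" by simp
  consider "t < -C" | "C \<le> t"
    using assms(5) by blast
  then show ?thesis
  proof cases
    case 1
    with bound have "AE \<omega> in M. Z \<omega> > t" by auto
    then have "prob {\<omega>\<in>space M. Z \<omega> > t} = 1" by (simp add: prob_Collect_eq_1)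
    then show ?thesis using \<open>S 1 = 1\<close> \<open>0 \<le> C\<close> 1 by (simp add: choquet_integrand_def)
  next
    case 2
    with bound have "AE \<omega> in M. \<not> Z \<omega> > t" by auto
    then have "prob {\<omega>\<in>space M. Z \<omega> > t} = 0" by (simp add: prob_Collect_eq_0)
    then show ?thesis using \<open>S 0 = 0\<close> \<open>0 \<le> C\<close> 2 by (simp add: choquet_integrand_def)
  qed
qed

lemma integrable_choquet_integrand:
  assumes "Z \<in> Linf M" and S: "mono_on {0..1} S" "S 0 = 0" "S 1 = 1"
  shows "integrable lborel (choquet_integrand M S Z)"
proof -
  obtain C where bound: "AE \<omega> in M. \<bar>Z \<omega>\<bar> \<le> C" and [measurable]: "Z \<in> borel_measurable M"
    using assms(1) by (auto simp: Linf_def)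
  define p where "p t = prob {\<omega>\<in>space M. Z \<omega> > t}" for t
  have p01: "p t \<in> {0..1}" for t
    by (simp add: p_def)
  have "S (p t) \<in> {0..1}" for t
    using mono_onD[OF S(1), of 0 "p t"] mono_onD[OF S(1), of "p t" 1] p01[of t] S(2,3) by auto
  then have norm_le: "norm (choquet_integrand M S Z t) \<le> 1" for t
    by (auto simp: choquet_integrand_def p_def)
  have "mono (\<lambda>t. - S (p t))"
  proof (rule monoI)
    fix s t :: real assume "s \<le> t"
    then have "p t \<le> p s"
      unfolding p_def by (intro finite_measure_mono) auto
    then show "- S (p s) \<le> - S (p t)"
      using mono_onD[OF S(1)] p01 by simp
  qed
  then have "(\<lambda>t. - (- S (p t))) \<in> borel_measurable borel"
    by (intro borel_measurable_uminus borel_measurable_mono)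
  then have [measurable]: "(\<lambda>t. S (prob {\<omega>\<in>space M. Z \<omega> > t})) \<in> borel_measurable borel"
    by (simp add: p_def)
  have [measurable]: "choquet_integrand M S Z \<in> borel_measurable borel"
    unfolding choquet_integrand_def[abs_def] by measurable
  show ?thesis
  proof (rule integrableI_bounded_set[where A = "{-C..C}" and B = 1])
    show "AE t in lborel. t \<notin> {-C..C} \<longrightarrow> choquet_integrand M S Z t = 0"
      using choquet_integrand_vanishes[OF _ bound S(2,3)] by auto
  qed (use norm_le in \<open>auto simp: emeasure_lborel_Icc_eq\<close>)
qed

lemma choquet_eq_integral_choquet_integrand:
  assumes "Z \<in> Linf M" and S: "mono_on {0..1} S" "S 0 = 0" "S 1 = 1"
  shows "choquet M S Z = (LINT t|lborel. choquet_integrand M S Z t)"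
proof -
  let ?f = "choquet_integrand M S Z"
  have f: "integrable lborel ?f"
    using assms by (rule integrable_choquet_integrand)
  have "choquet M S Z = (LINT t|lborel. indicator {0..} t *\<^sub>R ?f t) + (LINT t|lborel. indicator {..<0} t *\<^sub>R ?f t)"
    unfolding choquet_def set_lebesgue_integral_def
    by (intro arg_cong2[where f = "(+)"] Bochner_Integration.integral_cong)
      (auto simp: choquet_integrand_def indicator_def)
  also have "\<dots> = (LINT t|lborel. indicator {0..} t *\<^sub>R ?f t + indicator {..<0} t *\<^sub>R ?f t)"
    using f by (intro Bochner_Integration.integral_add[symmetric] integrable_mult_indicator) auto
  also have "\<dots> = (LINT t|lborel. ?f t)"
    by (intro Bochner_Integration.integral_cong) (auto simp: indicator_def)
  finally show ?thesis .
qed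

lemma choquet_id_eq_expectation:
  assumes "Z \<in> Linf M"
  shows "choquet M (\<lambda>x. x) Z = expectation Z"
proof -
  interpret lborel_M: pair_sigma_finite lborel M ..
  obtain C where bound: "AE \<omega> in M. \<bar>Z \<omega>\<bar> \<le> C" and [measurable]: "Z \<in> borel_measurable M"
    using assms by (auto simp: Linf_def)
  have "AE \<omega> in M. 0 \<le> C"
    using bound by eventually_elim auto
  then have "0 \<le> C" by simp
  \<comment> \<open>Integrating F over t gives Z, integrating over \<omega> gives the Choquet integrand;
      the cutoff to [-C, C] makes F integrable on the product, so Fubini applies.\<close>
  define F :: "real \<Rightarrow> 'a \<Rightarrow> real" where
    "F t \<omega> = indicator {-C..C} t * ((if t < Z \<omega> then 1 else 0) - (if t < 0 then 1 else 0))"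
    for t \<omega>
  have [measurable]: "(\<lambda>(t, \<omega>). F t \<omega>) \<in> borel_measurable (lborel \<Otimes>\<^sub>M M)"
    "(\<lambda>(\<omega>, t). F t \<omega>) \<in> borel_measurable (M \<Otimes>\<^sub>M lborel)"
    unfolding F_def by measurable
  have F_integrable: "integrable (lborel \<Otimes>\<^sub>M M) (\<lambda>(t, \<omega>). F t \<omega>)"
  proof (rule integrableI_bounded_set[where A = "{-C..C} \<times> space M" and B = 1])
    show "emeasure (lborel \<Otimes>\<^sub>M M) ({-C..C} \<times> space M) < \<infinity>"
      using \<open>0 \<le> C\<close>
      by (subst emeasure_pair_measure_Times) (auto simp: ennreal_mult_less_top emeasure_space_1)
  qed (auto simp: F_def indicator_def space_pair_measure)
  have integrand_eq: "choquet_integrand M (\<lambda>x. x) Z t = (\<integral>\<omega>. F t \<omega> \<partial>M)" for t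
  proof (cases "t \<in> {-C..C}")
    case True
    have "(\<integral>\<omega>. F t \<omega> \<partial>M)
        = (\<integral>\<omega>. indicator {\<omega>\<in>space M. t < Z \<omega>} \<omega> - (if t < 0 then 1 else 0) \<partial>M)"
      using True by (intro Bochner_Integration.integral_cong) (auto simp: F_def indicator_def)
    also have "\<dots> = prob {\<omega>\<in>space M. t < Z \<omega>} - (if t < 0 then 1 else 0)"
      by (subst Bochner_Integration.integral_diff)
        (auto simp: prob_space Int_absorb2 integrable_indicator_iff emeasure_eq_measure)
    finally show ?thesis by (simp add: choquet_integrand_def)
  next
    case False
    then show ?thesis
      using choquet_integrand_vanishes[OF _ bound, of "\<lambda>x. x" t] by (force simp: F_def)
  qed
  have F_integral: "(LINT t|lborel. F t \<omega>) = Z \<omega>" if "\<bar>Z \<omega>\<bar> \<le> C" for \<omega>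
  proof -
    have "(LINT t|lborel. F t \<omega>) = (LINT t|lborel. indicator {-C..<Z \<omega>} t - indicator {-C..<0} t)"
      using that by (intro Bochner_Integration.integral_cong) (auto simp: F_def indicator_def)
    also have "\<dots> = measure lborel {-C..<Z \<omega>} - measure lborel {-C..<0}"
      using that \<open>0 \<le> C\<close>
      by (subst Bochner_Integration.integral_diff) (auto simp: integrable_indicator_iff)
    also have "\<dots> = Z \<omega>"
      using that \<open>0 \<le> C\<close> by simp
    finally show ?thesis .
  qed
  have "choquet M (\<lambda>x. x) Z = (LINT t|lborel. \<integral>\<omega>. F t \<omega> \<partial>M)"
    using choquet_eq_integral_choquet_integrand[OF assms] integrand_eq by (simp add: mono_on_def)
  also have "\<dots> = (\<integral>\<omega>. (LINT t|lborel. F t \<omega>) \<partial>M)"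
    using lborel_M.Fubini_integral[OF F_integrable] by simp
  also have "\<dots> = expectation Z"
    using bound F_integral
    by (intro integral_cong_AE lborel.borel_measurable_lebesgue_integral) auto
  finally show ?thesis .
qed

lemma choquet_mono_distortion:
  assumes "Z \<in> Linf M"
    and S: "mono_on {0..1} S" "S 0 = 0" "S 1 = 1"
    and S': "mono_on {0..1} S'" "S' 0 = 0" "S' 1 = 1"
    and le: "\<And>x. x \<in> {0..1} \<Longrightarrow> S x \<le> S' x"
  shows "choquet M S Z \<le> choquet M S' Z"
proof -
  have "(LINT t|lborel. choquet_integrand M S Z t) \<le> (LINT t|lborel. choquet_integrand M S' Z t)"
  proof (rule integral_mono)
    show "choquet_integrand M S Z t \<le> choquet_integrand M S' Z t" for t
      using le by (simp add: choquet_integrand_def)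
  qed (use integrable_choquet_integrand assms(1) S S' in blast)+
  then show ?thesis
    using choquet_eq_integral_choquet_integrand assms(1) S S' by simp
qed

lemma choquet_le_expectation:
  assumes "Z \<in> Linf M" and S: "mono_on {0..1} S" "S 0 = 0" "S 1 = 1"
    and le: "\<And>x. x \<in> {0..1} \<Longrightarrow> S x \<le> x"
  shows "choquet M S Z \<le> expectation Z"
  using choquet_mono_distortion[OF assms(1) S, of "\<lambda>x. x"] le choquet_id_eq_expectation[OF assms(1)]
  by (simp add: mono_on_def)

lemma choquet_AE_const:
  assumes [measurable]: "Z \<in> borel_measurable M" and const: "AE \<omega> in M. Z \<omega> = c"
    and "S 0 = 0" "S 1 = 1"
  shows "choquet M S Z = c"
proof -
  have "prob {\<omega>\<in>space M. Z \<omega> > t} \<in> {0, 1}" for t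
  proof (cases "t < c")
    case True
    with const have "AE \<omega> in M. Z \<omega> > t" by auto
    then show ?thesis by (simp add: prob_Collect_eq_1)
  next
    case False
    with const have "AE \<omega> in M. \<not> Z \<omega> > t" by auto
    then show ?thesis by (simp add: prob_Collect_eq_0)
  qed
  then have "S (prob {\<omega>\<in>space M. Z \<omega> > t}) = prob {\<omega>\<in>space M. Z \<omega> > t}" for t
    using \<open>S 0 = 0\<close> \<open>S 1 = 1\<close> by (metis empty_iff insert_iff)
  then have "choquet M S Z = choquet M (\<lambda>x. x) Z"
    by (simp add: choquet_def)
  also have "\<dots> = expectation Z"
  proof (rule choquet_id_eq_expectation)
    have "AE \<omega> in M. \<bar>Z \<omega>\<bar> \<le> \<bar>c\<bar>"
      using const by eventually_elim simp
    then show "Z \<in> Linf M" by (auto simp: Linf_def)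
  qed
  also have "\<dots> = expectation (\<lambda>_. c)"
    using const by (intro integral_cong_AE) auto
  also have "\<dots> = c"
    by (simp add: prob_space)
  finally show ?thesis .
qed

end

lemma strictly_concave_onD:
  assumes "strictly_concave_on S u" "x \<in> S" "y \<in> S" "x \<noteq> y" "0 < t" "t < 1"
  shows "u ((1 - t) * x + t * y) > (1 - t) * u x + t * u y"
  using assms unfolding strictly_concave_on_def by blast

lemma strictly_concave_on_midpoint:
  assumes "strictly_concave_on UNIV u" "x \<noteq> y"
  shows "u ((x + y) / 2) > (u x + u y) / 2"
  using strictly_concave_onD[OF assms(1) _ _ assms(2), of "1/2"] by (simp add: field_simps)

lemma strictly_concave_on_imp_strict_mono:
  assumes concave: "strictly_concave_on UNIV u" and "mono u"
  shows "strict_mono u"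
proof (rule strict_monoI)
  fix a b :: real assume "a < b"
  then have "u ((a + b) / 2) \<le> u b"
    using \<open>mono u\<close> by (auto intro: monoD)
  moreover have "u ((a + b) / 2) > (u a + u b) / 2"
    using strictly_concave_on_midpoint[OF concave] \<open>a < b\<close> by simp
  ultimately show "u a < u b" by (simp add: field_simps)
qed

lemma strictly_concave_on_below_tangent:
  assumes concave: "strictly_concave_on UNIV u" and deriv: "(u has_real_derivative d) (at m)"
  shows "u x \<le> u m + d * (x - m)" and "x \<noteq> m \<Longrightarrow> u x < u m + d * (x - m)"
proof -
  have "convex_on UNIV (\<lambda>x. - u x)"
  proof (rule convex_onI)
    fix t y z :: real assume "0 < t" "t < 1"
    then show "- u ((1 - t) *\<^sub>R y + t *\<^sub>R z) \<le> (1 - t) * - u y + t * - u z"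
      using strictly_concave_onD[OF concave, of y z t] by (cases "y = z") (auto simp: algebra_simps)
  qed simp
  then have above: "- u y - - u m \<ge> - d * (y - m)" for y
    by (rule convex_on_imp_above_tangent) (use DERIV_minus[OF deriv] in auto)
  have tangent: "u y \<le> u m + d * (y - m)" for y
    using above[of y] by (simp add: algebra_simps)
  then show "u x \<le> u m + d * (x - m)" .
  assume "x \<noteq> m"
  show "u x < u m + d * (x - m)"
  proof (rule ccontr)
    assume "\<not> ?thesis"
    then have "u x = u m + d * (x - m)"
      using tangent[of x] by simp
    then show False
      using strictly_concave_on_midpoint[OF concave \<open>x \<noteq> m\<close>] tangent[of "(x + m) / 2"]
      by (simp add: algebra_simps) argo
  qed
qed

lemma (in prob_space) jensen_strictly_concave:
  assumes X: "integrable M X" and uX: "integrable M (\<lambda>\<omega>. u (X \<omega>))"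
    and concave: "strictly_concave_on UNIV u" and "u differentiable (at (expectation X))"
  shows "expectation (\<lambda>\<omega>. u (X \<omega>)) \<le> u (expectation X)"
    and "\<nexists>c. AE \<omega> in M. X \<omega> = c \<Longrightarrow> expectation (\<lambda>\<omega>. u (X \<omega>)) < u (expectation X)"
proof -
  define m where "m = expectation X"
  obtain d where deriv: "(u has_real_derivative d) (at m)"
    using \<open>u differentiable (at (expectation X))\<close> by (auto simp: m_def real_differentiable_def)
  define g where "g \<omega> = u m + d * (X \<omega> - m) - u (X \<omega>)" for \<omega>
  have g_nonneg: "0 \<le> g \<omega>" for \<omega>
    using strictly_concave_on_below_tangent(1)[OF concave deriv] by (simp add: g_def)
  have g_integrable: "integrable M g"
    unfolding g_def using X uX by simp
  have expectation_g: "expectation g = u m - expectation (\<lambda>\<omega>. u (X \<omega>))"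
    unfolding g_def using X uX by (simp add: prob_space m_def)
  then show "expectation (\<lambda>\<omega>. u (X \<omega>)) \<le> u (expectation X)"
    using Bochner_Integration.integral_nonneg[of M g] g_nonneg by (simp add: m_def)
  assume nonconst: "\<nexists>c. AE \<omega> in M. X \<omega> = c"
  show "expectation (\<lambda>\<omega>. u (X \<omega>)) < u (expectation X)"
  proof (rule ccontr)
    assume "\<not> ?thesis"
    then have "expectation g = 0"
      using expectation_g Bochner_Integration.integral_nonneg[of M g] g_nonneg by (simp add: m_def)
    then have "AE \<omega> in M. g \<omega> = 0"
      using integral_nonneg_eq_0_iff_AE[OF g_integrable] g_nonneg by simp
    then have "AE \<omega> in M. X \<omega> = m"
      using strictly_concave_on_below_tangent(2)[OF concave deriv] by (force simp: g_def)
    with nonconst show False by blast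
  qed
qed

locale pessimistic_rdu_economy = prob_space M for M :: "'a measure" +
  fixes T :: "real \<Rightarrow> real" and u :: "nat \<Rightarrow> real \<Rightarrow> real"
    and \<X> :: "('a \<Rightarrow> real) set" and n :: nat
  assumes \<X>_Linf: "\<X> \<subseteq> Linf M"
    and constant_in_\<X>: "\<And>c. (\<lambda>_. c) \<in> \<X>"
    and T_mono: "mono_on {0..1} T" and T_0: "T 0 = 0" and T_1: "T 1 = 1"
    and T_le_id: "\<And>x. x \<in> {0..1} \<Longrightarrow> T x \<le> x"
    and u_strictly_concave: "\<And>i. i < n \<Longrightarrow> strictly_concave_on UNIV (u i)"
    and u_mono: "\<And>i. i < n \<Longrightarrow> mono (u i)"
    and u_differentiable: "\<And>i x. i < n \<Longrightarrow> u i differentiable (at x)"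
begin

lemma u_strict_mono: "i < n \<Longrightarrow> strict_mono (u i)"
  using strictly_concave_on_imp_strict_mono u_strictly_concave u_mono by blast

lemma util_le_utility_of_expectation:
  assumes "i < n" and "Y \<in> \<X>"
  shows "util M T u i Y \<le> u i (expectation Y)"
    and "\<nexists>c. AE \<omega> in M. Y \<omega> = c \<Longrightarrow> util M T u i Y < u i (expectation Y)"
proof -
  have "Y \<in> Linf M"
    using \<X>_Linf \<open>Y \<in> \<X>\<close> by blast
  then have uY: "(\<lambda>\<omega>. u i (Y \<omega>)) \<in> Linf M"
    using Linf_mono_comp u_mono[OF \<open>i < n\<close>] by blast
  have "util M T u i Y \<le> expectation (\<lambda>\<omega>. u i (Y \<omega>))"
    using choquet_le_expectation[OF uY T_mono T_0 T_1 T_le_id]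
    by (cases "i = 0") (simp_all add: util_def)
  moreover note jensen = jensen_strictly_concave[OF Linf_integrable[OF \<open>Y \<in> Linf M\<close>]
      Linf_integrable[OF uY] u_strictly_concave[OF \<open>i < n\<close>] u_differentiable[OF \<open>i < n\<close>]]
  ultimately show "util M T u i Y \<le> u i (expectation Y)"
    and "\<nexists>c. AE \<omega> in M. Y \<omega> = c \<Longrightarrow> util M T u i Y < u i (expectation Y)"
    by (auto intro: order.trans order.strict_trans1)
qed

lemma util_ge_imp_le_expectation:
  assumes "i < n" and "Y \<in> \<X>" and "u i c \<le> util M T u i Y"
  shows "c \<le> expectation Y"
proof -
  have "u i c \<le> u i (expectation Y)"
    using assms(3) util_le_utility_of_expectation(1)[OF assms(1,2)] by linarith
  then show ?thesis
    using u_strict_mono[OF assms(1)] by (simp add: strict_mono_less_eq)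
qed

lemma util_gt_imp_less_expectation:
  assumes "i < n" and "Y \<in> \<X>" and "u i c < util M T u i Y"
  shows "c < expectation Y"
proof -
  have "u i c < u i (expectation Y)"
    using assms(3) util_le_utility_of_expectation(1)[OF assms(1,2)] by linarith
  then show ?thesis
    using u_strict_mono[OF assms(1)] by (simp add: strict_mono_less)
qed

lemma util_AE_const:
  assumes "i < n" and [measurable]: "Y \<in> borel_measurable M" and "AE \<omega> in M. Y \<omega> = c"
  shows "util M T u i Y = u i c"
proof -
  have [measurable]: "u i \<in> borel_measurable borel"
    using u_mono[OF \<open>i < n\<close>] by (rule borel_measurable_mono)
  have uY: "(\<lambda>\<omega>. u i (Y \<omega>)) \<in> borel_measurable M"
    by measurable
  have const: "AE \<omega> in M. u i (Y \<omega>) = u i c"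
    using \<open>AE \<omega> in M. Y \<omega> = c\<close> by eventually_elim simp
  have "choquet M T (\<lambda>\<omega>. u i (Y \<omega>)) = u i c"
    using uY const T_0 T_1 by (rule choquet_AE_const)
  moreover have "expectation (\<lambda>\<omega>. u i (Y \<omega>)) = u i c"
    using integral_cong_AE[OF uY _ const] by (simp add: prob_space)
  ultimately show ?thesis
    by (cases "i = 0") (simp_all add: util_def)
qed

lemma expectation_sum_allocation:
  assumes "Ys \<in> allocations M \<X> n w"
  shows "(\<Sum>i<n. expectation (Ys i)) = w"
proof -
  have Ys: "Ys i \<in> Linf M" if "i < n" for i
    using assms \<X>_Linf that by (auto simp: allocations_def)
  then have "(\<Sum>i<n. expectation (Ys i)) = expectation (\<lambda>\<omega>. \<Sum>i<n. Ys i \<omega>)"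
    by (simp add: Bochner_Integration.integral_sum Linf_integrable)
  also have "\<dots> = expectation (\<lambda>_. w)"
    using assms Ys
    by (intro integral_cong_AE borel_measurable_sum) (auto simp: allocations_def Linf_def)
  finally show ?thesis
    by (simp add: prob_space)
qed

lemma pareto_optimal_imp_full_insurance:
  assumes po: "pareto_optimal M T u \<X> n w Xs"
  shows "full_insurance M n Xs"
proof (rule ccontr)
  assume "\<not> full_insurance M n Xs"
  then obtain j where "j < n" and nonconst: "\<nexists>c. AE \<omega> in M. Xs j \<omega> = c"
    by (auto simp: full_insurance_def)
  have Xs: "Xs \<in> allocations M \<X> n w"
    using po by (simp add: pareto_optimal_def)
  then have in_\<X>: "Xs i \<in> \<X>" if "i < n" for i
    using that by (simp add: allocations_def)
  define Ys where "Ys i = (\<lambda>_::'a. expectation (Xs i))" for i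
  have "Ys \<in> allocations M \<X> n w"
    using expectation_sum_allocation[OF Xs] by (simp add: allocations_def Ys_def constant_in_\<X>)
  moreover have util_Ys: "util M T u i (Ys i) = u i (expectation (Xs i))" if "i < n" for i
    using util_AE_const[OF that] by (simp add: Ys_def)
  moreover have "\<forall>i<n. util M T u i (Xs i) \<le> util M T u i (Ys i)"
    using util_le_utility_of_expectation(1) in_\<X> util_Ys by simp
  moreover have "util M T u j (Xs j) < util M T u j (Ys j)"
    using util_le_utility_of_expectation(2)[OF \<open>j < n\<close> in_\<X> nonconst] util_Ys \<open>j < n\<close> by simp
  ultimately show False
    using po \<open>j < n\<close> unfolding pareto_optimal_def by blast
qed

lemma full_insurance_imp_pareto_optimal:
  assumes Xs: "Xs \<in> allocations M \<X> n w" and "full_insurance M n Xs"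
  shows "pareto_optimal M T u \<X> n w Xs"
  unfolding pareto_optimal_def
proof (intro conjI notI Xs)
  obtain c where c: "\<And>i. i < n \<Longrightarrow> AE \<omega> in M. Xs i \<omega> = c i"
    using \<open>full_insurance M n Xs\<close> unfolding full_insurance_def by metis
  have Xs_measurable: "Xs i \<in> borel_measurable M" if "i < n" for i
    using Xs \<X>_Linf that by (auto simp: allocations_def Linf_def)
  have util_Xs: "util M T u i (Xs i) = u i (c i)" if "i < n" for i
    using util_AE_const[OF that Xs_measurable[OF that] c[OF that]] .
  have "expectation (Xs i) = expectation (\<lambda>_. c i)" if "i < n" for i
    using Xs_measurable[OF that] c[OF that] by (intro integral_cong_AE) auto
  then have sum_c: "(\<Sum>i<n. c i) = w"
    using expectation_sum_allocation[OF Xs] by (simp add: prob_space)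
  assume "\<exists>Ys\<in>allocations M \<X> n w. (\<forall>i<n. util M T u i (Ys i) \<ge> util M T u i (Xs i)) \<and>
                                    (\<exists>i<n. util M T u i (Ys i) > util M T u i (Xs i))"
  then obtain Ys k where Ys: "Ys \<in> allocations M \<X> n w"
    and dominates: "\<And>i. i < n \<Longrightarrow> util M T u i (Ys i) \<ge> util M T u i (Xs i)"
    and "k < n" and strictly: "util M T u k (Ys k) > util M T u k (Xs k)"
    by blast
  have Ys_in_\<X>: "Ys i \<in> \<X>" if "i < n" for i
    using Ys that by (simp add: allocations_def)
  have "c i \<le> expectation (Ys i)" if "i < n" for i
    using util_ge_imp_le_expectation[OF that Ys_in_\<X>[OF that]] dominates[OF that] util_Xs[OF that]
    by simp
  moreover have "c k < expectation (Ys k)"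
    using util_gt_imp_less_expectation[OF \<open>k < n\<close> Ys_in_\<X>[OF \<open>k < n\<close>]] strictly util_Xs[OF \<open>k < n\<close>]
    by simp
  ultimately have "(\<Sum>i<n. c i) < (\<Sum>i<n. expectation (Ys i))"
    using \<open>k < n\<close> by (intro sum_strict_mono_ex1) auto
  then show False
    using sum_c expectation_sum_allocation[OF Ys] by simp
qed

end

theorem corollary3p8:
  fixes M :: "'a measure" and T :: "real \<Rightarrow> real" and u :: "nat \<Rightarrow> real \<Rightarrow> real"
    and \<X> :: "('a \<Rightarrow> real) set" and n :: nat and w :: real and Xs :: "nat \<Rightarrow> 'a \<Rightarrow> real"
  assumes "prob_space M" and "nonatomic M"
    and "\<X> \<subseteq> Linf M" and "\<And>c. (\<lambda>_. c) \<in> \<X>"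
    and "n \<ge> 2"
    and "twice_differentiable_on {0..1} T" and "strict_mono_on {0..1} T"
    and "T 0 = 0" and "T 1 = 1"
    and "\<And>i. i < n \<Longrightarrow> twice_differentiable_on UNIV (u i)"
    and "\<And>i. i < n \<Longrightarrow> strictly_concave_on UNIV (u i)"
    and "\<And>i. i < n \<Longrightarrow> mono (u i)"
    and "convex_on {0..1} T"
    and "Xs \<in> allocations M \<X> n w"
  shows "pareto_optimal M T u \<X> n w Xs \<longleftrightarrow> full_insurance M n Xs"
proof -
  have "T x \<le> x" if "x \<in> {0..1}" for x
    using convex_onD[OF assms(13), of x 0 1] that assms(8,9) by simp
  moreover have "u i differentiable (at x)" if "i < n" for i x
    using assms(10)[OF that] by (auto simp: twice_differentiable_on_def real_differentiable_def)
  ultimately interpret pessimistic_rdu_economy M T u \<X> n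
    using assms strict_mono_on_imp_mono_on
    by (intro pessimistic_rdu_economy.intro pessimistic_rdu_economy_axioms.intro) auto
  show ?thesis
    using pareto_optimal_imp_full_insurance full_insurance_imp_pareto_optimal assms(14) by blast
qed

end
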